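(* Let $(A,\mathcal{R})$ and $(B,\mathcal{S})$ be objects of $\mathbf{T}$ and let $f:(A,\mathcal{R})\to(B,\mathcal{S})$ be a $\mathbf{T}$-morphism. Then $\Psi f=f\sqcup \mathrm{id}_V:(\overline{A},\overline{\mathcal{R}})\to(\overline{B},\overline{\mathcal{S}})$ is a $\mathbf{T}$-morphism, where $(\overline{A},\overline{\mathcal{R}})=\Psi(A,\mathcal{R})$ and $(\overline{B},\overline{\mathcal{S}})=\Psi(B,\mathcal{S})$.
   Context: $\mathbf{T}$ is the category whose objects are pairs $(A,\mathcal{R})$ with $A$ a set and $\mathcal{R}$ an arbitrary family of subsets of $A$, and whose morphisms $f:(A,\mathcal{R})\to(B,\mathcal{S})$ are maps $f:A\to B$ with $f^{-1}[S]\in\mathcal{R}$ for all $S\in\mathcal{S}$. Fix a finite simple graph (symmetric, loopless) with vertex set $V=\{v_1,\dots,v_6\}$ and edge set $\mathcal{G}$ (a family of two-element subsets of $V$) having no non-identity automorphism. For a $\mathbf{T}$-object $(A,\mathcal{R})$ define $\Psi(A,\mathcal{R})=(\overline{A},\overline{\mathcal{R}})$ where $\overline{A}=A\sqcup V$ (disjoint union) and $\overline{\mathcal{R}}$ consists of the sets $\{v_i\}$ and $\overline{A}\setminus\{v_i\}$ for $i\in\{1,\dots,6\}$; the sets $G$ and $\overline{A}\setminus G$ for $G\in\mathcal{G}$; and the sets $\{v_1,v_2,v_3\}\cup R$ and $\{v_4,v_5,v_6\}\cup(A\setminus R)$ for $R\in\mathcal{R}$. For a map $f:A\to B$ put $\Psi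 f=f\sqcup\mathrm{id}_V:\overline{A}\to\overline{B}$. *)

theory Defs
  imports Main
begin

definition T_obj :: "'a set \<Rightarrow> 'a set set \<Rightarrow> bool" where
  "T_obj A R \<longleftrightarrow> R \<subseteq> Pow A"

definition T_mor :: "'a set \<Rightarrow> 'a set set \<Rightarrow> 'b set \<Rightarrow> 'b set set \<Rightarrow> ('a \<Rightarrow> 'b) \<Rightarrow> bool" where
  "T_mor A R B S f \<longleftrightarrow> (\<forall>x\<in>A. f x \<in> B) \<and> (\<forall>T\<in>S. {x\<in>A. f x \<in> T} \<in> R)"

definition Vset :: "(nat \<Rightarrow> 'v) \<Rightarrow> 'v set" where
  "Vset v = v ` {1..6}"

definition rigid_graph6 :: "(nat \<Rightarrow> 'v) \<Rightarrow> 'v set set \<Rightarrow> bool" where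
  "rigid_graph6 v G \<longleftrightarrow>
     inj_on v {1..6} \<and>
     (\<forall>e\<in>G. e \<subseteq> Vset v \<and> card e = 2) \<and>
     (\<forall>\<sigma>. bij_betw \<sigma> (Vset v) (Vset v) \<and> (\<lambda>e. \<sigma> ` e) ` G = G
          \<longrightarrow> (\<forall>x\<in>Vset v. \<sigma> x = x))"

definition Psi_car :: "(nat \<Rightarrow> 'v) \<Rightarrow> 'a set \<Rightarrow> ('a + 'v) set" where
  "Psi_car v A = Inl ` A \<union> Inr ` Vset v"

definition Psi_fam :: "(nat \<Rightarrow> 'v) \<Rightarrow> 'v set set \<Rightarrow> 'a set \<Rightarrow> 'a set set \<Rightarrow> ('a + 'v) set set" where
  "Psi_fam v G A R =
     {{Inr (v i)} | i. i \<in> {1..6}}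
   \<union> {Psi_car v A - {Inr (v i)} | i. i \<in> {1..6}}
   \<union> {Inr ` E | E. E \<in> G}
   \<union> {Psi_car v A - Inr ` E | E. E \<in> G}
   \<union> {Inr ` {v 1, v 2, v 3} \<union> Inl ` X | X. X \<in> R}
   \<union> {Inr ` {v 4, v 5, v 6} \<union> Inl ` (A - X) | X. X \<in> R}"

definition Psi_map :: "('a \<Rightarrow> 'b) \<Rightarrow> ('a + 'v) \<Rightarrow> ('b + 'v)" where
  "Psi_map f = map_sum f id"

end

theory Submission
  imports Defs
begin

text \<open>\<open>\<Psi> f\<close> is the identity on the gadget \<open>V\<close>, so preimages of the sets of \<open>\<Psi>(B,S)\<close> built
  from \<open>V\<close> and \<open>G\<close> alone are the corresponding sets of \<open>\<Psi>(A,R)\<close>; complements are preserved because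
  \<open>\<Psi> f\<close> maps carrier into carrier; and the preimage of \<open>{v1,v2,v3} \<union> X\<close> resp.
  \<open>{v4,v5,v6} \<union> (B - X)\<close> is \<open>{v1,v2,v3} \<union> f\<^sup>-\<^sup>1 X\<close> resp. \<open>{v4,v5,v6} \<union> (A - f\<^sup>-\<^sup>1 X)\<close>.\<close>

lemma preimage_Diff:
  assumes "\<forall>x\<in>A. g x \<in> B"
  shows "{x\<in>A. g x \<in> B - T} = A - {x\<in>A. g x \<in> T}"
  using assms by blast

lemma Psi_map_in_Psi_car:
  assumes "\<forall>x\<in>A. f x \<in> B"
  shows "\<forall>x\<in>Psi_car v A. Psi_map f x \<in> Psi_car v B"
  using assms by (auto simp: Psi_car_def Psi_map_def)

lemma Psi_map_preimage_Inr:
  "{x\<in>Psi_car v A. Psi_map f x \<in> Inr ` W} = Inr ` (Vset v \<inter> W)"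
  by (auto simp: Psi_car_def Psi_map_def)

lemma Psi_map_preimage_Inr_Un_Inl:
  "{x\<in>Psi_car v A. Psi_map f x \<in> Inr ` W \<union> Inl ` X}
     = Inr ` (Vset v \<inter> W) \<union> Inl ` {a\<in>A. f a \<in> X}"
  by (auto simp: Psi_car_def Psi_map_def)

lemma Psi_fam_cases[consumes 1, case_names vertex co_vertex edge co_edge lower upper]:
  assumes "T \<in> Psi_fam v G A R"
  obtains (vertex) i where "i \<in> {1..6}" "T = {Inr (v i)}"
    | (co_vertex) i where "i \<in> {1..6}" "T = Psi_car v A - {Inr (v i)}"
    | (edge) E where "E \<in> G" "T = Inr ` E"
    | (co_edge) E where "E \<in> G" "T = Psi_car v A - Inr ` E"
    | (lower) X where "X \<in> R" "T = Inr ` {v 1, v 2, v 3} \<union> Inl ` X"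
    | (upper) X where "X \<in> R" "T = Inr ` {v 4, v 5, v 6} \<union> Inl ` (A - X)"
  using assms unfolding Psi_fam_def Un_iff mem_Collect_eq
  by (elim disjE exE conjE) (simp_all add: that)

lemma Psi_fam_memberI:
  "i \<in> {1..6} \<Longrightarrow> {Inr (v i)} \<in> Psi_fam v G A R"
  "i \<in> {1..6} \<Longrightarrow> Psi_car v A - {Inr (v i)} \<in> Psi_fam v G A R"
  "E \<in> G \<Longrightarrow> Inr ` E \<in> Psi_fam v G A R"
  "E \<in> G \<Longrightarrow> Psi_car v A - Inr ` E \<in> Psi_fam v G A R"
  "X \<in> R \<Longrightarrow> Inr ` {v 1, v 2, v 3} \<union> Inl ` X \<in> Psi_fam v G A R"
  "X \<in> R \<Longrightarrow> Inr ` {v 4, v 5, v 6} \<union> Inl ` (A - X) \<in> Psi_fam v G A R"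
  unfolding Psi_fam_def by blast+

lemma Psi_map_preimage_in_Psi_fam:
  assumes G: "\<forall>E\<in>G. E \<subseteq> Vset v" and f: "T_mor A R B S f"
    and T: "T \<in> Psi_fam v G B S"
  shows "{x\<in>Psi_car v A. Psi_map f x \<in> T} \<in> Psi_fam v G A R"
proof -
  have maps: "\<forall>x\<in>A. f x \<in> B" and pre: "\<forall>X\<in>S. {a\<in>A. f a \<in> X} \<in> R"
    using f unfolding T_mor_def by auto
  have V: "v i \<in> Vset v" if "i \<in> {1..6}" for i
    using that unfolding Vset_def by blast
  have V123: "Vset v \<inter> {v 1, v 2, v 3} = {v 1, v 2, v 3}"
    and V456: "Vset v \<inter> {v 4, v 5, v 6} = {v 4, v 5, v 6}"
    by (simp_all add: Int_absorb1 V)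
  note preimage_co = preimage_Diff[OF Psi_map_in_Psi_car[OF maps, of v]]
  let ?P = "\<lambda>T. {x\<in>Psi_car v A. Psi_map f x \<in> T}"
  from T show ?thesis
  proof (cases rule: Psi_fam_cases)
    case (vertex i)
    have "?P T = {Inr (v i)}"
      using Psi_map_preimage_Inr[of v A f "{v i}"] V[OF vertex(1)]
      unfolding vertex(2) by simp
    then show ?thesis
      using vertex(1) by (simp only: Psi_fam_memberI)
  next
    case (co_vertex i)
    have "?P T = Psi_car v A - {Inr (v i)}"
      using Psi_map_preimage_Inr[of v A f "{v i}"] V[OF co_vertex(1)]
      unfolding co_vertex(2) preimage_co by simp
    then show ?thesis
      using co_vertex(1) by (simp only: Psi_fam_memberI)
  next
    case (edge E)
    have "?P T = Inr ` E"
      unfolding edge(2) Psi_map_preimage_Inr using G edge(1) by (simp add: Int_absorb1)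
    then show ?thesis
      using edge(1) by (simp only: Psi_fam_memberI)
  next
    case (co_edge E)
    have "?P T = Psi_car v A - Inr ` E"
      unfolding co_edge(2) preimage_co Psi_map_preimage_Inr
      using G co_edge(1) by (simp add: Int_absorb1)
    then show ?thesis
      using co_edge(1) by (simp only: Psi_fam_memberI)
  next
    case (lower X)
    have "?P T = Inr ` {v 1, v 2, v 3} \<union> Inl ` {a\<in>A. f a \<in> X}"
      unfolding lower(2) Psi_map_preimage_Inr_Un_Inl V123 ..
    moreover have "{a\<in>A. f a \<in> X} \<in> R"
      using lower(1) pre by blast
    ultimately show ?thesis
      by (simp only: Psi_fam_memberI)
  next
    case (upper X)
    have "?P T = Inr ` {v 4, v 5, v 6} \<union> Inl ` (A - {a\<in>A. f a \<in> X})"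
      unfolding upper(2) Psi_map_preimage_Inr_Un_Inl V456 preimage_Diff[OF maps] ..
    moreover have "{a\<in>A. f a \<in> X} \<in> R"
      using upper(1) pre by blast
    ultimately show ?thesis
      by (simp only: Psi_fam_memberI)
  qed
qed

lemma Psi_map_T_mor:
  assumes "\<forall>E\<in>G. E \<subseteq> Vset v" and "T_mor A R B S f"
  shows "T_mor (Psi_car v A) (Psi_fam v G A R) (Psi_car v B) (Psi_fam v G B S) (Psi_map f)"
proof -
  have "\<forall>x\<in>A. f x \<in> B"
    using assms(2) unfolding T_mor_def by simp
  then show ?thesis
    using Psi_map_in_Psi_car Psi_map_preimage_in_Psi_fam[OF assms]
    unfolding T_mor_def[of "Psi_car v A"] by blast
qed

theorem lemma3p1:
  fixes v :: "nat \<Rightarrow> 'v" and G :: "'v set set"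
    and A :: "'a set" and R :: "'a set set" and B :: "'b set" and S :: "'b set set"
    and f :: "'a \<Rightarrow> 'b"
  assumes "rigid_graph6 v G"
    and "T_obj A R" and "T_obj B S"
    and "T_mor A R B S f"
  shows "T_mor (Psi_car v A) (Psi_fam v G A R) (Psi_car v B) (Psi_fam v G B S) (Psi_map f)"
proof -
  have "\<forall>E\<in>G. E \<subseteq> Vset v"
    using assms(1) unfolding rigid_graph6_def by simp
  then show ?thesis
    using assms(4) by (rule Psi_map_T_mor)
qed

end
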